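(* Let $\sigma:\mathbb{R}^d\to\mathbb{R}^{d\times m}$ and $b:\mathbb{R}^d\to\mathbb{R}^d$ be continuous functions such that for some $C>0$ and all $x,y\in\mathbb{R}^d$ with $|x-y|<1$, $$\|\sigma(x)-\sigma(y)\|\le C|x-y|\sqrt{\log\tfrac{1}{|x-y|}},\qquad |b(x)-b(y)|\le C|x-y|\log\tfrac{1}{|x-y|}.$$ Then $\sigma$ and $b$ satisfy the following condition: there exist constants $C>0$ and $\mu>0$ such that for every integer $N>e$ and all $x,y\in\mathbb{R}^d$ with $|x|,|y|\le N$, $$\|\sigma(x)-\sigma(y)\|\le C\sqrt{\log N}\,|x-y|+C\frac{\log N}{N^{\mu}},\qquad |b(x)-b(y)|\le C\log N\,|x-y|+C\frac{\log N}{N^{\mu}}.$$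
   Context: $|\cdot|$ is the Euclidean norm and $\|\sigma\|^2=\sum_{i,j}\sigma_{ij}^2$. The expressions $u\log(1/u)$ and $u\sqrt{\log(1/u)}$ are taken to be $0$ at $u=0$. *)

theory Defs
  imports "HOL-Analysis.Analysis"
begin

text \<open>Frobenius (Hilbert-Schmidt) norm of a d x m matrix, stored as a vector of rows
  (rows indexed by 'd, columns by 'm): sum of squares of all entries.\<close>
definition frob_norm :: "real ^ 'm ^ 'd \<Rightarrow> real" where
  "frob_norm A = sqrt (\<Sum>i\<in>UNIV. \<Sum>j\<in>UNIV. (A $ i $ j)\<^sup>2)"

end

theory Submission
  imports Defs
begin

text \<open>
  Write \<open>r = |x - y|\<close> and split at the scale \<open>1/N\<close>. Below it, the modulus
  \<open>r \<phi>(ln (1/r))\<close> (with \<open>\<phi> = sqrt\<close> or \<open>\<phi> = id\<close>) is at most \<open>r ln (1/r) \<le> ln N / N\<close>,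
  because \<open>ln t / t\<close> decreases for \<open>t \<ge> e\<close>. Between \<open>1/N\<close> and \<open>1\<close> one has
  \<open>\<phi>(ln (1/r)) \<le> \<phi>(ln N)\<close>, a Lipschitz bound. At distances of order one the modulus is
  Lipschitz with constant \<open>C\<close>, and cutting a long segment into pieces of such length
  extends this to all larger distances. Hence the condition holds with \<open>\<mu> = 1\<close>.
\<close>

lemma norm_diff_le_mult_norm_at_large_scale:
  fixes f :: "'a::real_normed_vector \<Rightarrow> 'b::real_normed_vector"
  assumes a: "a > 0"
    and scale: "\<And>u v. a \<le> norm (u - v) \<Longrightarrow> norm (u - v) \<le> 2 * a \<Longrightarrow>
                  norm (f u - f v) \<le> K * norm (u - v)"
    and far: "a \<le> norm (x - y)"
  shows "norm (f x - f y) \<le> K * norm (x - y)"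
proof -
  define r where "r = norm (x - y)"
  define n where "n = nat \<lfloor>r / a\<rfloor>"
  have n_pos: "real n \<ge> 1" and n_le: "real n \<le> r / a" and n_gt: "r / a < real n + 1"
    using far a by (auto simp: n_def r_def le_nat_iff le_floor_iff)
  have "r < a + a * real n"
    using n_gt a by (simp add: field_simps)
  also have "\<dots> \<le> 2 * a * real n"
    using a n_pos by simp
  finally have step: "a \<le> r / n" "r / n \<le> 2 * a"
    using n_pos n_le a by (simp_all add: field_simps)
  define p where "p k = y + (real k / real n) *\<^sub>R (x - y)" for k
  have piece: "norm (p (Suc k) - p k) = r / n" for k
  proof -
    have "p (Suc k) - p k = (1 / real n) *\<^sub>R (x - y)"
      using n_pos by (simp add: p_def add_divide_distrib scaleR_add_left)
    thus ?thesis by (simp add: r_def)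
  qed
  have "f x - f y = (\<Sum>k<n. f (p (Suc k)) - f (p k))"
    using n_pos by (subst sum_lessThan_telescope) (simp add: p_def)
  hence "norm (f x - f y) \<le> (\<Sum>k<n. norm (f (p (Suc k)) - f (p k)))"
    by (simp add: norm_sum)
  also have "\<dots> \<le> (\<Sum>k<n. K * (r / n))"
    using scale piece step by (intro sum_mono) metis
  also have "\<dots> = K * r"
    using n_pos by simp
  finally show ?thesis by (simp add: r_def)
qed

lemma two_less_exp_one: "2 < exp (1::real)"
proof -
  have "3/2 \<le> exp (1/2::real)"
    using exp_ge_add_one_self[of "1/2::real"] by simp
  hence "(3/2)^2 \<le> (exp (1/2::real))^2"
    by (intro power_mono) auto
  thus ?thesis
    by (simp add: power2_eq_square flip: exp_add)
qed

lemma mult_ln_inverse_le: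
  fixes r N :: real
  assumes "0 < r" "r \<le> 1 / N" "exp 1 \<le> N"
  shows "r * ln (1 / r) \<le> ln N / N"
proof -
  have "N > 0"
    using assms(3) exp_gt_zero order.strict_trans2 by blast
  hence "N \<le> 1 / r"
    using assms(1,2) by (simp add: field_simps)
  from ln_x_over_x_mono[OF assms(3) this] show ?thesis
    using assms(1) by (simp add: mult.commute)
qed

lemma norm_diff_le_modulus_far:
  fixes f :: "'a::real_normed_vector \<Rightarrow> 'b::real_normed_vector" and \<phi> :: "real \<Rightarrow> real"
  assumes C: "C \<ge> 0" and mono: "mono_on {0..} \<phi>"
    and modulus: "\<And>x y. norm (x - y) < 1 \<Longrightarrow>
                    norm (f x - f y) \<le> C * norm (x - y) * \<phi> (ln (1 / norm (x - y)))"
    and far: "exp (-1) \<le> norm (x - y)"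
  shows "norm (f x - f y) \<le> C * \<phi> 1 * norm (x - y)"
proof (rule norm_diff_le_mult_norm_at_large_scale[OF exp_gt_zero _ far])
  fix u v :: 'a
  assume u: "exp (-1) \<le> norm (u - v)" "norm (u - v) \<le> 2 * exp (-1)"
  have "2 * exp (-1) < (1::real)"
    using two_less_exp_one by (simp add: exp_minus field_simps)
  hence "norm (u - v) < 1" and "0 < norm (u - v)"
    using u by (auto intro: order.strict_trans2)
  moreover have "-1 \<le> ln (norm (u - v))"
    using u \<open>0 < norm (u - v)\<close> by (simp add: ln_ge_iff)
  ultimately have "\<phi> (ln (1 / norm (u - v))) \<le> \<phi> 1"
    by (intro mono_onD[OF mono]) (auto simp: ln_div)
  hence "C * norm (u - v) * \<phi> (ln (1 / norm (u - v))) \<le> C * norm (u - v) * \<phi> 1"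
    using C by (intro mult_left_mono) auto
  with modulus[OF \<open>norm (u - v) < 1\<close>] show "norm (f u - f v) \<le> C * \<phi> 1 * norm (u - v)"
    by (simp add: mult_ac)
qed

lemma norm_diff_le_modulus_at_level:
  fixes f :: "'a::real_normed_vector \<Rightarrow> 'b::real_normed_vector" and \<phi> :: "real \<Rightarrow> real"
  assumes C: "C \<ge> 0" and mono: "mono_on {0..} \<phi>" and "0 \<le> \<phi> 0"
    and below_id: "\<And>t. 1 \<le> t \<Longrightarrow> \<phi> t \<le> t"
    and modulus: "\<And>x y. norm (x - y) < 1 \<Longrightarrow>
                    norm (f x - f y) \<le> C * norm (x - y) * \<phi> (ln (1 / norm (x - y)))"
    and N: "exp 1 < N"
  shows "norm (f x - f y) \<le> C * \<phi> (ln N) * norm (x - y) + C * ln N / N"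
proof -
  have "1 < N"
    using N one_less_exp_iff[of 1] by linarith
  hence N_pos: "0 < N"
    by simp
  have ln_N: "1 \<le> ln N"
    using N N_pos by (simp add: ln_ge_iff)
  have \<phi>_ln_N: "\<phi> 1 \<le> \<phi> (ln N)" "0 \<le> \<phi> (ln N)"
    using ln_N mono_onD[OF mono, of 0 "ln N"] mono_onD[OF mono, of 1 "ln N"] \<open>0 \<le> \<phi> 0\<close> by auto
  have tail: "0 \<le> C * ln N / N"
    using C ln_N \<open>1 < N\<close> by simp
  define r where "r = norm (x - y)"
  have head: "0 \<le> C * \<phi> (ln N) * r"
    using C \<phi>_ln_N by (simp add: r_def)
  consider "r = 0" | "0 < r" "r \<le> 1 / N" | "1 / N < r" "r < 1" | "1 \<le> r"
    using norm_ge_zero[of "x - y"] unfolding r_def by linarith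
  then have "norm (f x - f y) \<le> C * \<phi> (ln N) * r + C * ln N / N"
  proof cases
    case 1
    then show ?thesis using head tail by (simp add: r_def)
  next
    case 2
    have "1 / N < 1"
      using \<open>1 < N\<close> by simp
    have "ln N \<le> ln (1 / r)"
      using 2 N_pos by (simp add: field_simps)
    hence "\<phi> (ln (1 / r)) \<le> ln (1 / r)"
      using below_id ln_N by simp
    hence "norm (f x - f y) \<le> C * (r * ln (1 / r))"
      using modulus[of x y] 2 \<open>1 / N < 1\<close> C mult_left_mono[of _ _ "C * r"]
      by (fastforce simp: r_def mult_ac)
    also have "\<dots> \<le> C * (ln N / N)"
      using mult_ln_inverse_le[OF 2] N C by (intro mult_left_mono) auto
    finally show ?thesis using head by simp
  next
    case 3
    have "0 < r"
      using 3 N_pos by (smt (verit) divide_pos_pos)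
    hence "1 < 1 / r" "1 / r < N"
      using 3 N_pos by (simp_all add: field_simps)
    hence "0 \<le> ln (1 / r)" "ln (1 / r) \<le> ln N"
      using \<open>0 < r\<close> by (simp_all add: ln_mono)
    hence "C * r * \<phi> (ln (1 / r)) \<le> C * r * \<phi> (ln N)"
      using \<open>0 < r\<close> C ln_N by (intro mult_left_mono mono_onD[OF mono]) auto
    then show ?thesis
      using modulus[of x y] 3 tail by (simp add: r_def mult_ac)
  next
    case 4
    have "exp (-1) \<le> r"
      using 4 order.trans[of "exp (-1)" 1 r] by simp
    from norm_diff_le_modulus_far[OF C mono modulus] this
    have "norm (f x - f y) \<le> C * \<phi> 1 * r"
      by (simp add: r_def)
    also have "\<dots> \<le> C * \<phi> (ln N) * r"
      using C \<phi>_ln_N 4 by (intro mult_right_mono mult_left_mono) auto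
    finally show ?thesis using tail by simp
  qed
  thus ?thesis by (simp add: r_def)
qed

lemma frob_norm_eq_norm: "frob_norm A = norm A"
  by (simp add: frob_norm_def norm_vec_def L2_set_def sum_nonneg)

theorem proposition4p7:
  fixes \<sigma> :: "real ^ 'd \<Rightarrow> real ^ 'm ^ 'd"
    and b :: "real ^ 'd \<Rightarrow> real ^ 'd"
  assumes cont_sigma: "continuous_on UNIV \<sigma>"
    and cont_b: "continuous_on UNIV b"
    and hyp: "\<exists>C>0. \<forall>x y. norm (x - y) < 1 \<longrightarrow>
        frob_norm (\<sigma> x - \<sigma> y) \<le> C * norm (x - y) * sqrt (ln (1 / norm (x - y))) \<and>
        norm (b x - b y) \<le> C * norm (x - y) * ln (1 / norm (x - y))"
  shows "\<exists>C>0. \<exists>\<mu>>0. \<forall>N::nat. real N > exp 1 \<longrightarrow>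
        (\<forall>x y. norm x \<le> real N \<and> norm y \<le> real N \<longrightarrow>
          frob_norm (\<sigma> x - \<sigma> y) \<le> C * sqrt (ln (real N)) * norm (x - y) + C * ln (real N) / real N powr \<mu> \<and>
          norm (b x - b y) \<le> C * ln (real N) * norm (x - y) + C * ln (real N) / real N powr \<mu>)"
proof -
  obtain C where "C > 0" and modulus: "\<And>x y. norm (x - y) < 1 \<Longrightarrow>
        norm (\<sigma> x - \<sigma> y) \<le> C * norm (x - y) * sqrt (ln (1 / norm (x - y))) \<and>
        norm (b x - b y) \<le> C * norm (x - y) * ln (1 / norm (x - y))"
    using hyp by (auto simp: frob_norm_eq_norm)
  have sqrt_mono: "mono_on {0..} sqrt"
    by (simp add: mono_onI)
  have sqrt_below_id: "sqrt t \<le> t" if "1 \<le> t" for t :: real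
    using real_sqrt_le_mono[of t "t\<^sup>2"] that by (simp add: power2_eq_square)
  have level_bounds:
    "norm (\<sigma> x - \<sigma> y) \<le> C * sqrt (ln (real N)) * norm (x - y) + C * ln (real N) / real N powr 1 \<and>
     norm (b x - b y) \<le> C * ln (real N) * norm (x - y) + C * ln (real N) / real N powr 1"
    if N: "exp 1 < real N" for N :: nat and x y :: "real ^ 'd"
  proof -
    have "real N powr 1 = real N"
      using N exp_gt_zero[of 1] by simp
    moreover have "norm (\<sigma> x - \<sigma> y) \<le> C * sqrt (ln (real N)) * norm (x - y) + C * ln (real N) / real N"
      using \<open>C > 0\<close> modulus
      by (intro norm_diff_le_modulus_at_level[OF _ sqrt_mono _ sqrt_below_id _ N]) auto
    moreover have "norm (b x - b y) \<le> C * ln (real N) * norm (x - y) + C * ln (real N) / real N"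
      using \<open>C > 0\<close> modulus
      by (intro norm_diff_le_modulus_at_level[where \<phi> = "\<lambda>t. t", OF _ _ _ _ _ N])
         (auto simp: mono_on_def)
    ultimately show ?thesis
      by simp
  qed
  show ?thesis
    using \<open>C > 0\<close> level_bounds
    by (intro exI[of _ C]) (auto simp: frob_norm_eq_norm intro!: exI[of _ "1::real"])
qed

end
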